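(* Any quantum algorithm which estimates the distances of a metric space of $n$ points (given by oracle access to the distances) within a constant approximation factor has query complexity at least $\Omega(n^{3/2})$.
   Context: Estimating within approximation factor $\alpha$ means outputting an $n\times n$ matrix $A$ with $d(p_i,p_j)\le A[i][j]\le \alpha\,d(p_i,p_j)$ for all $i,j$, where the distances are available only via an oracle returning $d(p_i,p_j)$ on input $(i,j)$. *)

theory Defs
  imports Complex_Main
begin

text \<open>The distances
are natural numbers below m (the oracle's answer register is Z_m).  The Hilbert space
has the computational basis of tuples (i,j,b,w) with i,j<n (query register),
b<m (answer register), w<W (workspace), encoded as a single index k < n*n*m*W.\<close>

definition qdim :: "nat \<Rightarrow> nat \<Rightarrow> nat \<Rightarrow> nat" where
  "qdim n m W = n * n * m * W"

definition dec_w :: "nat \<Rightarrow> nat \<Rightarrow> nat \<Rightarrow> nat \<Rightarrow> nat" where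
  "dec_w n m W k = k mod W"
definition dec_b :: "nat \<Rightarrow> nat \<Rightarrow> nat \<Rightarrow> nat \<Rightarrow> nat" where
  "dec_b n m W k = (k div W) mod m"
definition dec_j :: "nat \<Rightarrow> nat \<Rightarrow> nat \<Rightarrow> nat \<Rightarrow> nat" where
  "dec_j n m W k = (k div (W * m)) mod n"
definition dec_i :: "nat \<Rightarrow> nat \<Rightarrow> nat \<Rightarrow> nat \<Rightarrow> nat" where
  "dec_i n m W k = k div (W * m * n)"

definition enc :: "nat \<Rightarrow> nat \<Rightarrow> nat \<Rightarrow> nat \<Rightarrow> nat \<Rightarrow> nat \<Rightarrow> nat \<Rightarrow> nat" where
  "enc n m W i j b w = ((i * n + j) * m + b) * W + w"

definition mat_vec :: "nat \<Rightarrow> (nat \<Rightarrow> nat \<Rightarrow> complex) \<Rightarrow> (nat \<Rightarrow> complex) \<Rightarrow> (nat \<Rightarrow> complex)" where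
  "mat_vec D M v = (\<lambda>r. \<Sum>c<D. M r c * v c)"

definition is_unitary :: "nat \<Rightarrow> (nat \<Rightarrow> nat \<Rightarrow> complex) \<Rightarrow> bool" where
  "is_unitary D M \<longleftrightarrow>
     (\<forall>r<D. \<forall>r'<D. (\<Sum>k<D. M r k * cnj (M r' k)) = (if r = r' then 1 else 0))"

definition oracle_shift :: "nat \<Rightarrow> nat \<Rightarrow> nat \<Rightarrow> (nat \<Rightarrow> nat \<Rightarrow> nat) \<Rightarrow> nat \<Rightarrow> nat" where
  "oracle_shift n m W d k =
     (let i = dec_i n m W k; j = dec_j n m W k; b = dec_b n m W k; w = dec_w n m W k
      in enc n m W i j ((b + d i j) mod m) w)"

definition oracle_mat :: "nat \<Rightarrow> nat \<Rightarrow> nat \<Rightarrow> (nat \<Rightarrow> nat \<Rightarrow> nat) \<Rightarrow> nat \<Rightarrow> nat \<Rightarrow> complex" where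
  "oracle_mat n m W d r c = (if r = oracle_shift n m W d c then 1 else 0)"

definition basis_vec :: "nat \<Rightarrow> nat \<Rightarrow> complex" where
  "basis_vec k = (\<lambda>r. if r = k then 1 else 0)"

fun run :: "nat \<Rightarrow> nat \<Rightarrow> nat \<Rightarrow> (nat \<Rightarrow> nat \<Rightarrow> nat) \<Rightarrow> (nat \<Rightarrow> nat \<Rightarrow> nat \<Rightarrow> complex)
            \<Rightarrow> nat \<Rightarrow> (nat \<Rightarrow> complex)" where
  "run n m W d U 0 = mat_vec (qdim n m W) (U 0) (basis_vec 0)"
| "run n m W d U (Suc t) =
     mat_vec (qdim n m W) (U (Suc t))
       (mat_vec (qdim n m W) (oracle_mat n m W d) (run n m W d U t))"

definition success_prob ::
  "nat \<Rightarrow> nat \<Rightarrow> nat \<Rightarrow> (nat \<Rightarrow> nat \<Rightarrow> nat) \<Rightarrow> (nat \<Rightarrow> nat \<Rightarrow> nat \<Rightarrow> complex) \<Rightarrow> nat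
     \<Rightarrow> (nat \<Rightarrow> (nat \<Rightarrow> nat \<Rightarrow> real)) \<Rightarrow> ((nat \<Rightarrow> nat \<Rightarrow> real) \<Rightarrow> bool) \<Rightarrow> real" where
  "success_prob n m W d U T out good =
     (\<Sum>k<qdim n m W. if good (out k) then (cmod (run n m W d U T k))\<^sup>2 else 0)"

definition is_metric_bounded :: "nat \<Rightarrow> nat \<Rightarrow> (nat \<Rightarrow> nat \<Rightarrow> nat) \<Rightarrow> bool" where
  "is_metric_bounded n m d \<longleftrightarrow>
     (\<forall>i<n. d i i = 0) \<and>
     (\<forall>i<n. \<forall>j<n. i \<noteq> j \<longrightarrow> 0 < d i j) \<and>
     (\<forall>i<n. \<forall>j<n. d i j = d j i) \<and>
     (\<forall>i<n. \<forall>j<n. \<forall>k<n. d i k \<le> d i j + d j k) \<and>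
     (\<forall>i<n. \<forall>j<n. d i j < m)"

definition estimates :: "real \<Rightarrow> nat \<Rightarrow> (nat \<Rightarrow> nat \<Rightarrow> nat) \<Rightarrow> (nat \<Rightarrow> nat \<Rightarrow> real) \<Rightarrow> bool" where
  "estimates \<alpha> n d A \<longleftrightarrow>
     (\<forall>i<n. \<forall>j<n. real (d i j) \<le> A i j \<and> A i j \<le> \<alpha> * real (d i j))"

end

theory Submission
  imports Defs "Jordan_Normal_Form.Determinant" "HOL-Analysis.L2_Norm"
    "HOL-Combinatorics.Permutations" "HOL-Number_Theory.Cong"
begin

text \<open>Ambainis' weighted adversary method. Split the points into halves of size \<open>h = n div 2\<close>
  and, for a permutation \<open>\<sigma>\<close> of the first half, let \<open>d\<^sub>\<sigma>\<close> put \<open>a\<close> and \<open>h + \<sigma> a\<close> at distance 1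
  and all other distinct points at distance \<open>L > \<alpha>\<close>. For \<open>a \<noteq> b\<close> and \<open>\<tau> = \<sigma> \<circ> (a b)\<close> no matrix
  estimates both \<open>d\<^sub>\<sigma>\<close> and \<open>d\<^sub>\<tau>\<close> within \<open>\<alpha>\<close>, so a successful algorithm must drive the overlap
  of the two final states below \<open>19/20\<close>, although all states start out equal. A query changes
  that overlap only through the amplitudes on the four entries where \<open>d\<^sub>\<sigma>\<close> and \<open>d\<^sub>\<tau>\<close> differ. A
  fixed query is such an entry and an edge of \<open>\<sigma>\<close> for at most \<open>2h\<close> of the \<open>h(h - 1)\<close> pairs
  \<open>(a, b)\<close>, but an edge of \<open>\<tau>\<close> for at most two of them; weighting the two kinds of amplitude
  by \<open>1/\<surd>h\<close> and \<open>\<surd>h\<close> in the AM-GM inequality, one query lowers the total overlap by at most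
  \<open>8\<surd>h\<close> per permutation. Hence \<open>T \<ge> h(h - 1)/(160\<surd>h)\<close>, which is of order \<open>n powr (3/2)\<close>.\<close>

section \<open>Vectors and unitary matrices\<close>

definition vec_inner :: "nat \<Rightarrow> (nat \<Rightarrow> complex) \<Rightarrow> (nat \<Rightarrow> complex) \<Rightarrow> complex" where
  "vec_inner D u v = (\<Sum>k<D. u k * cnj (v k))"

definition vec_sqnorm :: "nat \<Rightarrow> (nat \<Rightarrow> complex) \<Rightarrow> real" where
  "vec_sqnorm D u = (\<Sum>k<D. (cmod (u k))\<^sup>2)"

lemma vec_sqnorm_nonneg: "0 \<le> vec_sqnorm D u"
  unfolding vec_sqnorm_def by (simp add: sum_nonneg)

lemma vec_inner_self: "vec_inner D u u = of_real (vec_sqnorm D u)"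
  unfolding vec_inner_def vec_sqnorm_def of_real_sum
  by (intro sum.cong refl) (metis complex_norm_square)

lemma cmod_vec_inner_le: "cmod (vec_inner D u v) \<le> sqrt (vec_sqnorm D u) * sqrt (vec_sqnorm D v)"
proof -
  have "cmod (vec_inner D u v) \<le> (\<Sum>k<D. \<bar>cmod (u k)\<bar> * \<bar>cmod (v k)\<bar>)"
    unfolding vec_inner_def by (rule order_trans[OF norm_sum]) (simp add: norm_mult)
  also have "\<dots> \<le> L2_set (\<lambda>k. cmod (u k)) {..<D} * L2_set (\<lambda>k. cmod (v k)) {..<D}"
    by (rule L2_set_mult_ineq)
  also have "\<dots> = sqrt (vec_sqnorm D u) * sqrt (vec_sqnorm D v)"
    unfolding L2_set_def vec_sqnorm_def by simp
  finally show ?thesis .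
qed

lemma vec_sqnorm_basis_vec:
  assumes "k < D"
  shows "vec_sqnorm D (basis_vec k) = 1"
proof -
  have "vec_sqnorm D (basis_vec k) = (\<Sum>r<D. if r = k then 1 else 0)"
    unfolding vec_sqnorm_def basis_vec_def by (intro sum.cong) auto
  then show ?thesis using assms by simp
qed

text \<open>\<^const>\<open>is_unitary\<close> only asks for orthonormal rows; in finite dimension a right
  inverse is a left inverse, which gives orthonormal columns.\<close>

lemma is_unitary_columns:
  assumes U: "is_unitary D M" and c: "c < D" and c': "c' < D"
  shows "(\<Sum>r<D. M r c * cnj (M r c')) = (if c = c' then 1 else 0)"
proof -
  define A where "A = mat D D (\<lambda>(r, c). M r c)"
  define B where "B = mat D D (\<lambda>(r, c). cnj (M c r))"
  have "A * B = 1\<^sub>m D"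
  proof (rule eq_matI)
    fix i j assume i: "i < dim_row (1\<^sub>m D)" and j: "j < dim_col (1\<^sub>m D)"
    have "(A * B) $$ (i, j) = (\<Sum>k<D. M i k * cnj (M j k))"
      using i j unfolding A_def B_def by (simp add: scalar_prod_def lessThan_atLeast0)
    then show "(A * B) $$ (i, j) = 1\<^sub>m D $$ (i, j)"
      using U i j unfolding is_unitary_def by simp
  qed (auto simp: A_def B_def)
  then have "B * A = 1\<^sub>m D"
    by (rule mat_mult_left_right_inverse[rotated 2]) (auto simp: A_def B_def)
  moreover have "(B * A) $$ (c', c) = (\<Sum>r<D. M r c * cnj (M r c'))"
    using c c' unfolding A_def B_def by (simp add: scalar_prod_def lessThan_atLeast0 mult.commute)
  ultimately show ?thesis using c c' by auto
qed

lemma vec_inner_unitary: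
  assumes U: "is_unitary D M"
  shows "vec_inner D (mat_vec D M u) (mat_vec D M v) = vec_inner D u v"
proof -
  have "vec_inner D (mat_vec D M u) (mat_vec D M v) =
        (\<Sum>r<D. \<Sum>c<D. \<Sum>c'<D. (u c * cnj (v c')) * (M r c * cnj (M r c')))"
    unfolding vec_inner_def mat_vec_def
    by (intro sum.cong refl) (simp add: cnj_sum sum_product mult_ac)
  also have "\<dots> = (\<Sum>c<D. \<Sum>c'<D. \<Sum>r<D. (u c * cnj (v c')) * (M r c * cnj (M r c')))"
    by (subst sum.swap) (rule sum.cong[OF refl], subst sum.swap, rule refl)
  also have "\<dots> = (\<Sum>c<D. \<Sum>c'<D. (u c * cnj (v c')) * (if c = c' then 1 else 0))"
    by (intro sum.cong refl) (simp add: sum_distrib_left[symmetric] is_unitary_columns[OF U])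
  also have "\<dots> = vec_inner D u v"
    unfolding vec_inner_def by (simp add: if_distrib cong: if_cong)
  finally show ?thesis .
qed

lemma vec_sqnorm_unitary: "is_unitary D M \<Longrightarrow> vec_sqnorm D (mat_vec D M u) = vec_sqnorm D u"
  using vec_inner_unitary[of D M u u] by (simp add: vec_inner_self)

lemma is_unitary_permutation_matrix:
  assumes f: "bij_betw f {..<D} {..<D}"
  shows "is_unitary D (\<lambda>r c. if r = f c then 1 else 0)"
  unfolding is_unitary_def
proof (intro allI impI)
  fix r r' assume r: "r < D" and r': "r' < D"
  obtain c where c: "c < D" "f c = r"
    using f r by (metis bij_betw_imp_surj_on imageE lessThan_iff)
  have preimage: "r = f k \<longleftrightarrow> k = c" if "k < D" for k
    using f c that by (auto simp: bij_betw_def inj_on_def)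
  have "(\<Sum>k<D. (if r = f k then 1 else 0) * cnj (if r' = f k then 1 else 0)) =
        (\<Sum>k<D. if k = c then (if r' = f k then 1 else 0) else (0::complex))"
    by (intro sum.cong refl) (simp add: preimage)
  also have "\<dots> = (if r = r' then 1 else 0)"
    using c by auto
  finally show "(\<Sum>k<D. (if r = f k then 1 else 0) * cnj (if r' = f k then 1 else 0)) =
        (if r = r' then 1 else 0)" .
qed

lemma sqrt_mult_le_weighted:
  fixes A B s :: real
  assumes "0 \<le> A" "0 \<le> B" "0 < s"
  shows "2 * (sqrt A * sqrt B) \<le> s * A + B / s"
proof -
  have "sqrt A * sqrt B = sqrt ((s * A) * (B / s))"
    using assms by (simp add: real_sqrt_mult)
  also have "\<dots> \<le> (s * A + B / s) / 2"
    by (rule arith_geo_mean_sqrt) (use assms in auto)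
  finally show ?thesis by simp
qed

lemma sqrt_mult_add_sqrt_mult_compl_le:
  fixes a b :: real
  assumes "2/3 \<le> a" "a \<le> 1" "0 \<le> b" "b \<le> 1/3"
  shows "sqrt (a * b) + sqrt ((1 - a) * (1 - b)) \<le> 19/20"
proof -
  \<comment> \<open>\<open>7/10 \<approx> 1/\<surd>2\<close> is the optimal AM-GM weight at the extreme case \<open>a = 2/3\<close>, \<open>b = 1/3\<close>\<close>
  have "sqrt (a * b) = sqrt (((7/10) * a) * ((10/7) * b))" by simp
  also have "\<dots> \<le> ((7/10) * a + (10/7) * b) / 2"
    by (rule arith_geo_mean_sqrt) (use assms in auto)
  finally have first: "sqrt (a * b) \<le> ((7/10) * a + (10/7) * b) / 2" .
  have "sqrt ((1 - a) * (1 - b)) = sqrt (((10/7) * (1 - a)) * ((7/10) * (1 - b)))"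
    by (simp add: algebra_simps)
  also have "\<dots> \<le> ((10/7) * (1 - a) + (7/10) * (1 - b)) / 2"
    by (rule arith_geo_mean_sqrt) (use assms in auto)
  finally have second: "sqrt ((1 - a) * (1 - b)) \<le> ((10/7) * (1 - a) + (7/10) * (1 - b)) / 2" .
  have "((7/10) * a + (10/7) * b) / 2 + ((10/7) * (1 - a) + (7/10) * (1 - b)) / 2 \<le> 19/20"
    using assms by (simp add: field_simps)
  then show ?thesis using first second by linarith
qed

lemma cmod_vec_inner_le_if_separated:
  assumes u: "vec_sqnorm D u = 1" and v: "vec_sqnorm D v = 1" and G: "G \<subseteq> {..<D}"
    and su: "2/3 \<le> (\<Sum>k\<in>G. (cmod (u k))\<^sup>2)"
    and sv: "2/3 \<le> (\<Sum>k\<in>{..<D} - G. (cmod (v k))\<^sup>2)"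
  shows "cmod (vec_inner D u v) \<le> 19/20"
proof -
  let ?C = "{..<D} - G"
  have split: "(\<Sum>k<D. f k) = (\<Sum>k\<in>G. f k) + (\<Sum>k\<in>?C. f k)" for f :: "nat \<Rightarrow> real"
    using sum.subset_diff[OF G] by (simp add: add.commute)
  define a where "a = (\<Sum>k\<in>G. (cmod (u k))\<^sup>2)"
  define b where "b = (\<Sum>k\<in>G. (cmod (v k))\<^sup>2)"
  have a': "(\<Sum>k\<in>?C. (cmod (u k))\<^sup>2) = 1 - a" and b': "(\<Sum>k\<in>?C. (cmod (v k))\<^sup>2) = 1 - b"
    using split[of "\<lambda>k. (cmod (u k))\<^sup>2"] split[of "\<lambda>k. (cmod (v k))\<^sup>2"] u v
    unfolding vec_sqnorm_def a_def b_def by simp_all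
  have "0 \<le> b" "0 \<le> 1 - a"
    unfolding b_def a'[symmetric] by (simp_all add: sum_nonneg)
  have "cmod (vec_inner D u v) \<le> (\<Sum>k<D. \<bar>cmod (u k)\<bar> * \<bar>cmod (v k)\<bar>)"
    unfolding vec_inner_def by (rule order_trans[OF norm_sum]) (simp add: norm_mult)
  also have "\<dots> = (\<Sum>k\<in>G. \<bar>cmod (u k)\<bar> * \<bar>cmod (v k)\<bar>) + (\<Sum>k\<in>?C. \<bar>cmod (u k)\<bar> * \<bar>cmod (v k)\<bar>)"
    by (rule split)
  also have "\<dots> \<le> L2_set (\<lambda>k. cmod (u k)) G * L2_set (\<lambda>k. cmod (v k)) G +
                 L2_set (\<lambda>k. cmod (u k)) ?C * L2_set (\<lambda>k. cmod (v k)) ?C"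
    by (intro add_mono L2_set_mult_ineq)
  also have "\<dots> = sqrt (a * b) + sqrt ((1 - a) * (1 - b))"
    unfolding L2_set_def a' b' a_def b_def by (simp add: real_sqrt_mult)
  also have "\<dots> \<le> 19/20"
    by (rule sqrt_mult_add_sqrt_mult_compl_le)
      (use su sv \<open>0 \<le> b\<close> \<open>0 \<le> 1 - a\<close> b' a_def in auto)
  finally show ?thesis .
qed

section \<open>The distance oracle\<close>

lemma dec_less:
  assumes "k < qdim n m W"
  shows "dec_i n m W k < n" "dec_j n m W k < n" "dec_b n m W k < m" "dec_w n m W k < W"
proof -
  have k: "k < W * m * n * n" and pos: "0 < n" "0 < m" "0 < W"
    using assms by (auto simp: qdim_def mult_ac intro: gr0I)
  show "dec_i n m W k < n"
    unfolding dec_i_def using k pos by (simp add: div_less_iff_less_mult mult_ac)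
  show "dec_j n m W k < n" "dec_b n m W k < m" "dec_w n m W k < W"
    unfolding dec_j_def dec_b_def dec_w_def using pos by simp_all
qed

lemma enc_dec: "enc n m W (dec_i n m W k) (dec_j n m W k) (dec_b n m W k) (dec_w n m W k) = k"
proof -
  have "k = (k div W) * W + k mod W"
    and "k div W = (k div (W * m)) * m + (k div W) mod m"
    and "k div (W * m) = (k div (W * m * n)) * n + (k div (W * m)) mod n"
    by (simp_all add: div_mult2_eq)
  then show ?thesis
    unfolding enc_def dec_i_def dec_j_def dec_b_def dec_w_def by (metis add.commute)
qed

lemma dec_enc:
  assumes "j < n" "b < m" "w < W"
  shows "dec_i n m W (enc n m W i j b w) = i" "dec_j n m W (enc n m W i j b w) = j"
    "dec_b n m W (enc n m W i j b w) = b" "dec_w n m W (enc n m W i j b w) = w"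
proof -
  have 1: "enc n m W i j b w div W = (i * n + j) * m + b"
    unfolding enc_def using assms by simp
  then have 2: "enc n m W i j b w div (W * m) = i * n + j"
    using assms by (simp add: div_mult2_eq)
  then have 3: "enc n m W i j b w div (W * m * n) = i"
    using assms by (simp add: div_mult2_eq)
  show "dec_w n m W (enc n m W i j b w) = w"
    unfolding dec_w_def enc_def using assms by simp
  show "dec_b n m W (enc n m W i j b w) = b" "dec_j n m W (enc n m W i j b w) = j"
    "dec_i n m W (enc n m W i j b w) = i"
    unfolding dec_b_def dec_j_def dec_i_def using 1 2 3 assms by simp_all
qed

lemma mult_add_less_mult:
  fixes x y a b :: nat
  assumes "x < a" "y < b"
  shows "x * b + y < a * b"
proof -
  have "x * b + y < Suc x * b" using assms(2) by simp
  also have "\<dots> \<le> a * b" using assms(1) by (intro mult_le_mono1) simp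
  finally show ?thesis .
qed

lemma enc_less_qdim:
  assumes "i < n" "j < n" "b < m" "w < W"
  shows "enc n m W i j b w < qdim n m W"
  unfolding enc_def qdim_def by (intro mult_add_less_mult assms)

lemma dec_oracle_shift:
  assumes "k < qdim n m W"
  shows "dec_i n m W (oracle_shift n m W d k) = dec_i n m W k"
    "dec_j n m W (oracle_shift n m W d k) = dec_j n m W k"
    "dec_b n m W (oracle_shift n m W d k) = (dec_b n m W k + d (dec_i n m W k) (dec_j n m W k)) mod m"
    "dec_w n m W (oracle_shift n m W d k) = dec_w n m W k"
  using dec_less[OF assms] unfolding oracle_shift_def Let_def by (simp_all add: dec_enc)

lemma oracle_shift_less:
  assumes "k < qdim n m W"
  shows "oracle_shift n m W d k < qdim n m W"
proof -
  have "0 < m" using dec_less(3)[OF assms] by simp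
  then show ?thesis
    unfolding oracle_shift_def Let_def using dec_less[OF assms] by (intro enc_less_qdim) simp_all
qed

lemma inj_on_oracle_shift: "inj_on (oracle_shift n m W d) {..<qdim n m W}"
proof (rule inj_onI)
  fix k k' assume "k \<in> {..<qdim n m W}" "k' \<in> {..<qdim n m W}"
    and eq: "oracle_shift n m W d k = oracle_shift n m W d k'"
  then have k: "k < qdim n m W" and k': "k' < qdim n m W" by auto
  note dec = dec_oracle_shift[OF k, of d] dec_oracle_shift[OF k', of d]
  have i: "dec_i n m W k = dec_i n m W k'" and j: "dec_j n m W k = dec_j n m W k'"
    and w: "dec_w n m W k = dec_w n m W k'"
    using dec eq by metis+
  have "[dec_b n m W k + d (dec_i n m W k) (dec_j n m W k)
        = dec_b n m W k' + d (dec_i n m W k) (dec_j n m W k)] (mod m)"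
    unfolding cong_def using dec eq i j by metis
  then have "[dec_b n m W k = dec_b n m W k'] (mod m)"
    by (simp only: cong_add_rcancel_nat)
  then have "dec_b n m W k = dec_b n m W k'"
    using dec_less[OF k] dec_less[OF k'] by (simp add: cong_def)
  then show "k = k'" using enc_dec[of n m W k] enc_dec[of n m W k'] i j w by metis
qed

lemma bij_betw_oracle_shift: "bij_betw (oracle_shift n m W d) {..<qdim n m W} {..<qdim n m W}"
  unfolding bij_betw_def
proof
  show "oracle_shift n m W d ` {..<qdim n m W} = {..<qdim n m W}"
    by (rule endo_inj_surj[OF finite_lessThan _ inj_on_oracle_shift]) (auto simp: oracle_shift_less)
qed (rule inj_on_oracle_shift)

lemma is_unitary_oracle_mat: "is_unitary (qdim n m W) (oracle_mat n m W d)"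
  using is_unitary_permutation_matrix[OF bij_betw_oracle_shift]
  unfolding oracle_mat_def .

definition query_pair :: "nat \<Rightarrow> nat \<Rightarrow> nat \<Rightarrow> nat \<Rightarrow> nat \<times> nat" where
  "query_pair n m W k = (dec_i n m W k, dec_j n m W k)"

definition proj_queries ::
  "nat \<Rightarrow> nat \<Rightarrow> nat \<Rightarrow> (nat \<times> nat) set \<Rightarrow> (nat \<Rightarrow> complex) \<Rightarrow> nat \<Rightarrow> complex" where
  "proj_queries n m W S u k = (if query_pair n m W k \<in> S then u k else 0)"

lemma query_pair_oracle_shift:
  "k < qdim n m W \<Longrightarrow> query_pair n m W (oracle_shift n m W d k) = query_pair n m W k"
  unfolding query_pair_def by (simp add: dec_oracle_shift)

lemma oracle_proj_queries:
  "mat_vec (qdim n m W) (oracle_mat n m W d) (proj_queries n m W S u) =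
   proj_queries n m W S (mat_vec (qdim n m W) (oracle_mat n m W d) u)"
proof
  fix r
  show "mat_vec (qdim n m W) (oracle_mat n m W d) (proj_queries n m W S u) r =
        proj_queries n m W S (mat_vec (qdim n m W) (oracle_mat n m W d) u) r"
    unfolding mat_vec_def proj_queries_def oracle_mat_def
    by (cases "query_pair n m W r \<in> S")
      (auto intro!: sum.cong sum.neutral simp: query_pair_oracle_shift)
qed

lemma oracle_proj_queries_agree:
  assumes "\<And>i j. (i, j) \<in> S \<Longrightarrow> d1 i j = d2 i j"
  shows "mat_vec (qdim n m W) (oracle_mat n m W d1) (proj_queries n m W S u) =
         mat_vec (qdim n m W) (oracle_mat n m W d2) (proj_queries n m W S u)"
proof -
  have "oracle_shift n m W d1 k = oracle_shift n m W d2 k" if "query_pair n m W k \<in> S" for k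
    using assms that unfolding oracle_shift_def query_pair_def Let_def by simp
  then show ?thesis
    unfolding mat_vec_def proj_queries_def oracle_mat_def by (intro ext sum.cong refl) auto
qed

lemma vec_inner_split_queries:
  assumes "H \<inter> L = {}"
  shows "vec_inner (qdim n m W) u v =
      vec_inner (qdim n m W) (proj_queries n m W H u) (proj_queries n m W H v)
    + vec_inner (qdim n m W) (proj_queries n m W L u) (proj_queries n m W L v)
    + vec_inner (qdim n m W) (proj_queries n m W (- (H \<union> L)) u) (proj_queries n m W (- (H \<union> L)) v)"
  unfolding vec_inner_def sum.distrib[symmetric]
  by (intro sum.cong refl) (use assms in \<open>auto simp: proj_queries_def\<close>)

lemma sum_vec_sqnorm_proj_queries_le:
  assumes P: "finite P" and B: "\<And>q. card {p \<in> P. q \<in> S p} \<le> B"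
  shows "(\<Sum>p\<in>P. vec_sqnorm D (proj_queries n m W (S p) u)) \<le> real B * vec_sqnorm D u"
proof -
  have "(\<Sum>p\<in>P. vec_sqnorm D (proj_queries n m W (S p) u)) =
        (\<Sum>k<D. \<Sum>p\<in>P. if query_pair n m W k \<in> S p then (cmod (u k))\<^sup>2 else 0)"
    unfolding vec_sqnorm_def proj_queries_def
    by (subst sum.swap) (intro sum.cong refl, auto)
  also have "\<dots> = (\<Sum>k<D. real (card {p \<in> P. query_pair n m W k \<in> S p}) * (cmod (u k))\<^sup>2)"
    by (intro sum.cong refl) (simp add: sum.inter_filter[OF P, symmetric])
  also have "\<dots> \<le> (\<Sum>k<D. real B * (cmod (u k))\<^sup>2)"
    by (intro sum_mono mult_right_mono) (auto simp: B)
  also have "\<dots> = real B * vec_sqnorm D u"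
    unfolding vec_sqnorm_def by (simp add: sum_distrib_left)
  finally show ?thesis .
qed

text \<open>Keeping \<open>H\<close> and \<open>L\<close> apart is what allows the adversary to weight the two
  terms differently.\<close>

lemma oracle_query_bound:
  fixes n m W :: nat
  assumes HL: "H \<inter> L = {}" and agree: "\<And>i j. (i, j) \<notin> H \<union> L \<Longrightarrow> d1 i j = d2 i j"
  defines "D \<equiv> qdim n m W" and "P \<equiv> proj_queries n m W"
  shows "cmod (vec_inner D (mat_vec D (oracle_mat n m W d1) u) (mat_vec D (oracle_mat n m W d2) v)
                - vec_inner D u v)
    \<le> 2 * (sqrt (vec_sqnorm D (P H u)) * sqrt (vec_sqnorm D (P H v)))
      + 2 * (sqrt (vec_sqnorm D (P L u)) * sqrt (vec_sqnorm D (P L v)))"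
proof -
  let ?O1 = "mat_vec D (oracle_mat n m W d1)" and ?O2 = "mat_vec D (oracle_mat n m W d2)"
  let ?R = "- (H \<union> L)"
  have U1: "is_unitary D (oracle_mat n m W d1)" and U2: "is_unitary D (oracle_mat n m W d2)"
    unfolding D_def by (rule is_unitary_oracle_mat)+
  have change: "cmod (vec_inner D (?O1 (P S u)) (?O2 (P S v)) - vec_inner D (P S u) (P S v))
      \<le> 2 * (sqrt (vec_sqnorm D (P S u)) * sqrt (vec_sqnorm D (P S v)))" for S
    using norm_triangle_ineq4[of "vec_inner D (?O1 (P S u)) (?O2 (P S v))" "vec_inner D (P S u) (P S v)"]
      cmod_vec_inner_le[of D "?O1 (P S u)" "?O2 (P S v)"] cmod_vec_inner_le[of D "P S u" "P S v"]
    by (simp add: vec_sqnorm_unitary[OF U1] vec_sqnorm_unitary[OF U2])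
  have "?O2 (P ?R v) = ?O1 (P ?R v)"
    unfolding D_def P_def by (rule oracle_proj_queries_agree) (use agree in auto)
  then have rest: "vec_inner D (?O1 (P ?R u)) (?O2 (P ?R v)) = vec_inner D (P ?R u) (P ?R v)"
    using vec_inner_unitary[OF U1] by simp
  have "vec_inner D (?O1 u) (?O2 v) - vec_inner D u v =
      (vec_inner D (?O1 (P H u)) (?O2 (P H v)) - vec_inner D (P H u) (P H v)) +
      (vec_inner D (?O1 (P L u)) (?O2 (P L v)) - vec_inner D (P L u) (P L v))"
    using vec_inner_split_queries[OF HL, of n m W "?O1 u" "?O2 v"]
      vec_inner_split_queries[OF HL, of n m W u v] rest
    unfolding D_def P_def by (simp add: oracle_proj_queries)
  then show ?thesis
    using change[of H] change[of L] norm_triangle_ineq by (smt (verit))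
qed

lemma vec_sqnorm_run:
  assumes "0 < qdim n m W" and "\<And>t. t \<le> T \<Longrightarrow> is_unitary (qdim n m W) (U t)" and "t \<le> T"
  shows "vec_sqnorm (qdim n m W) (run n m W d U t) = 1"
  using \<open>t \<le> T\<close>
proof (induction t)
  case 0
  then show ?case using assms(1,2) by (simp add: vec_sqnorm_unitary vec_sqnorm_basis_vec)
next
  case (Suc t)
  then show ?case using assms(2) by (simp add: vec_sqnorm_unitary is_unitary_oracle_mat)
qed

lemma success_prob_eq_sum:
  "success_prob n m W d U T out good =
   (\<Sum>k\<in>{k \<in> {..<qdim n m W}. good (out k)}. (cmod (run n m W d U T k))\<^sup>2)"
  unfolding success_prob_def sum.inter_filter[OF finite_lessThan] ..

section \<open>Metrics from perfect matchings\<close>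

definition match_edge :: "nat \<Rightarrow> (nat \<Rightarrow> nat) \<Rightarrow> nat \<Rightarrow> nat \<Rightarrow> bool" where
  "match_edge h \<sigma> i j \<longleftrightarrow> (i < h \<and> j = h + \<sigma> i) \<or> (j < h \<and> i = h + \<sigma> j)"

definition match_dist :: "nat \<Rightarrow> nat \<Rightarrow> (nat \<Rightarrow> nat) \<Rightarrow> nat \<Rightarrow> nat \<Rightarrow> nat" where
  "match_dist h L \<sigma> i j = (if i = j then 0 else if match_edge h \<sigma> i j then 1 else L)"

definition distinct_pairs :: "nat \<Rightarrow> (nat \<times> nat) set" where
  "distinct_pairs h = {(a, b). a < h \<and> b < h \<and> a \<noteq> b}"

fun swap_pair :: "(nat \<Rightarrow> nat) \<Rightarrow> nat \<times> nat \<Rightarrow> nat \<Rightarrow> nat" where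
  "swap_pair \<sigma> (a, b) = \<sigma> \<circ> transpose a b"

fun pair_edges :: "nat \<Rightarrow> (nat \<Rightarrow> nat) \<Rightarrow> nat \<times> nat \<Rightarrow> (nat \<times> nat) set" where
  "pair_edges h \<sigma> (a, b) = {(a, h + \<sigma> a), (h + \<sigma> a, a), (b, h + \<sigma> b), (h + \<sigma> b, b)}"

lemma finite_distinct_pairs: "finite (distinct_pairs h)"
  unfolding distinct_pairs_def by (rule finite_subset[of _ "{..<h} \<times> {..<h}"]) auto

lemma card_distinct_pairs: "card (distinct_pairs h) = h * h - h"
proof -
  have "{..<h} \<times> {..<h} = distinct_pairs h \<union> (\<lambda>a. (a, a)) ` {..<h}"
    and "distinct_pairs h \<inter> (\<lambda>a. (a, a)) ` {..<h} = {}"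
    unfolding distinct_pairs_def by auto
  then have "h * h = card (distinct_pairs h) + card ((\<lambda>a. (a, a)) ` {..<h})"
    by (metis card_Un_disjoint card_cartesian_product card_lessThan finite_distinct_pairs
        finite_imageI finite_lessThan)
  moreover have "card ((\<lambda>a. (a, a)) ` {..<h}) = h"
    by (subst card_image) (auto simp: inj_on_def)
  ultimately show ?thesis by simp
qed

lemma swap_pair_permutes:
  "\<sigma> permutes {..<h} \<Longrightarrow> p \<in> distinct_pairs h \<Longrightarrow> swap_pair \<sigma> p permutes {..<h}"
  by (cases p) (auto simp: distinct_pairs_def intro!: permutes_compose permutes_swap_id)

lemma swap_pair_swap_pair [simp]: "swap_pair (swap_pair \<sigma> p) p = \<sigma>"
  by (cases p) (simp add: o_assoc[symmetric])

lemma pair_edges_swap_pair_disjoint: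
  assumes \<sigma>: "\<sigma> permutes {..<h}" and p: "p \<in> distinct_pairs h"
  shows "pair_edges h \<sigma> p \<inter> pair_edges h (swap_pair \<sigma> p) p = {}"
proof -
  obtain a b where ab: "p = (a, b)" "a \<noteq> b" using p by (auto simp: distinct_pairs_def)
  then have "\<sigma> a \<noteq> \<sigma> b" using permutes_inj[OF \<sigma>] by (auto dest: injD)
  then show ?thesis using ab by auto
qed

lemma match_dist_swap_pair:
  assumes "p \<in> distinct_pairs h" and "(i, j) \<notin> pair_edges h \<sigma> p \<union> pair_edges h (swap_pair \<sigma> p) p"
  shows "match_dist h L (swap_pair \<sigma> p) i j = match_dist h L \<sigma> i j"
proof -
  obtain a b where ab: "p = (a, b)" "a < h" "b < h"
    using assms(1) by (auto simp: distinct_pairs_def)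
  have at_pair: "(i, j) \<in> pair_edges h \<rho> p" if "match_edge h \<rho> i j" "i \<in> {a, b} \<or> j \<in> {a, b}" for \<rho>
    using that ab unfolding match_edge_def by auto
  have "match_edge h (swap_pair \<sigma> p) i j = match_edge h \<sigma> i j"
  proof (cases "i \<in> {a, b} \<or> j \<in> {a, b}")
    case True
    then show ?thesis using at_pair assms(2) by blast
  next
    case False
    then show ?thesis using ab(1) unfolding match_edge_def by auto
  qed
  then show ?thesis unfolding match_dist_def by simp
qed

text \<open>Two edges of a matching never share an endpoint, so a path \<open>i, j, k\<close> with \<open>i \<noteq> k\<close>
  has length at least \<open>1 + L\<close>.\<close>

lemma is_metric_bounded_match_dist:
  assumes \<sigma>: "\<sigma> permutes {..<h}" and "2 * h \<le> n" "1 \<le> L" "L < m"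
  shows "is_metric_bounded n m (match_dist h L \<sigma>)"
proof -
  have inj: "\<sigma> x = \<sigma> y \<Longrightarrow> x = y" for x y
    using permutes_inj[OF \<sigma>] by (auto dest: injD)
  have triangle: "match_dist h L \<sigma> i k \<le> match_dist h L \<sigma> i j + match_dist h L \<sigma> j k"
    for i j k
  proof (cases "i = k \<or> i = j \<or> j = k")
    case False
    then have "\<not> (match_edge h \<sigma> i j \<and> match_edge h \<sigma> j k)"
      using inj unfolding match_edge_def by auto
    then show ?thesis using False \<open>1 \<le> L\<close> by (auto simp: match_dist_def)
  qed (auto simp: match_dist_def)
  have symmetric: "match_dist h L \<sigma> i j = match_dist h L \<sigma> j i" for i j
    unfolding match_dist_def match_edge_def by auto
  show ?thesis
    unfolding is_metric_bounded_def
  proof (intro conjI)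
    show "\<forall>i<n. \<forall>j<n. \<forall>k<n. match_dist h L \<sigma> i k \<le> match_dist h L \<sigma> i j + match_dist h L \<sigma> j k"
      using triangle by blast
  qed (use symmetric assms(3,4) in \<open>auto simp: match_dist_def\<close>)
qed

lemma not_estimates_both_match_dists:
  assumes \<sigma>: "\<sigma> permutes {..<h}" and p: "p \<in> distinct_pairs h" and "2 * h \<le> n" "\<alpha> < real L"
    and "estimates \<alpha> n (match_dist h L \<sigma>) A"
  shows "\<not> estimates \<alpha> n (match_dist h L (swap_pair \<sigma> p)) A"
proof
  assume swapped: "estimates \<alpha> n (match_dist h L (swap_pair \<sigma> p)) A"
  obtain a b where ab: "p = (a, b)" "a < h" "b < h" "a \<noteq> b"
    using p by (auto simp: distinct_pairs_def)
  have "\<sigma> a \<noteq> \<sigma> b" using ab permutes_inj[OF \<sigma>] by (auto dest: injD)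
  have "\<sigma> a < h" using ab permutes_in_image[OF \<sigma>] by simp
  let ?j = "h + \<sigma> a"
  have in_range: "a < n" "?j < n" using ab \<open>\<sigma> a < h\<close> \<open>2 * h \<le> n\<close> by auto
  have "match_dist h L \<sigma> a ?j = 1"
    using ab(2) unfolding match_dist_def match_edge_def by auto
  then have "A a ?j \<le> \<alpha>"
    using assms(5) in_range unfolding estimates_def by force
  moreover have "match_dist h L (swap_pair \<sigma> p) a ?j = L"
    using ab(2) \<open>\<sigma> a \<noteq> \<sigma> b\<close> unfolding match_dist_def match_edge_def ab(1) by auto
  then have "real L \<le> A a ?j"
    using swapped in_range unfolding estimates_def by force
  ultimately show False using assms(4) by simp
qed

text \<open>A query \<open>(i, j)\<close> meets the edges of \<open>\<sigma>\<close> at the pair \<open>(a, b)\<close> only if \<open>min i j \<in> {a, b}\<close>,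
  but it meets the edges of \<open>\<sigma> \<circ> (a b)\<close> there only if in addition the other endpoint
  of the pair is \<open>\<sigma>\<inverse> (max i j - h)\<close>.\<close>

lemma card_pair_edges_le:
  "card {p \<in> distinct_pairs h. q \<in> pair_edges h \<sigma> p} \<le> 2 * h"
proof -
  obtain i j where q: "q = (i, j)" by (cases q)
  let ?x = "min i j"
  have "{p \<in> distinct_pairs h. q \<in> pair_edges h \<sigma> p} \<subseteq> {?x} \<times> {..<h} \<union> {..<h} \<times> {?x}"
    using q unfolding distinct_pairs_def by auto
  then have "card {p \<in> distinct_pairs h. q \<in> pair_edges h \<sigma> p} \<le> card ({?x} \<times> {..<h} \<union> {..<h} \<times> {?x})"
    by (intro card_mono) auto
  also have "\<dots> \<le> 2 * h"
    using card_Un_le[of "{?x} \<times> {..<h}" "{..<h} \<times> {?x}"] by (simp add: card_cartesian_product)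
  finally show ?thesis .
qed

lemma card_swapped_pair_edges_le:
  assumes \<sigma>: "\<sigma> permutes {..<h}"
  shows "card {p \<in> distinct_pairs h. q \<in> pair_edges h (swap_pair \<sigma> p) p} \<le> 2"
proof -
  obtain i j where q: "q = (i, j)" by (cases q)
  let ?x = "min i j" and ?y = "inv_into UNIV \<sigma> (max i j - h)"
  have "{p \<in> distinct_pairs h. q \<in> pair_edges h (swap_pair \<sigma> p) p} \<subseteq> {(?x, ?y), (?y, ?x)}"
    using q unfolding distinct_pairs_def by (auto simp: permutes_inverses(2)[OF \<sigma>])
  then have "card {p \<in> distinct_pairs h. q \<in> pair_edges h (swap_pair \<sigma> p) p} \<le> card {(?x, ?y), (?y, ?x)}"
    by (intro card_mono) auto
  also have "\<dots> \<le> 2" by (simp add: card_insert_le_m1)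
  finally show ?thesis .
qed

lemma sum_swap_pair_reindex:
  fixes F :: "(nat \<Rightarrow> nat) \<Rightarrow> nat \<times> nat \<Rightarrow> real"
  shows "(\<Sum>\<sigma>\<in>{\<sigma>. \<sigma> permutes {..<h}}. \<Sum>p\<in>distinct_pairs h. F (swap_pair \<sigma> p) p) =
         (\<Sum>\<sigma>\<in>{\<sigma>. \<sigma> permutes {..<h}}. \<Sum>p\<in>distinct_pairs h. F \<sigma> p)"
proof -
  let ?X = "{\<sigma>. \<sigma> permutes {..<h}} \<times> distinct_pairs h"
  let ?f = "\<lambda>(\<sigma>, p). (swap_pair \<sigma> p, p)"
  have "bij_betw ?f ?X ?X"
    by (rule bij_betw_byWitness[where f' = ?f]) (auto simp del: swap_pair.simps intro: swap_pair_permutes)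
  then have "(\<Sum>x\<in>?X. case_prod F (?f x)) = (\<Sum>x\<in>?X. case_prod F x)"
    by (rule sum.reindex_bij_betw)
  then show ?thesis by (simp add: sum.cartesian_product split_def)
qed

section \<open>The adversary potential\<close>

locale adversary =
  fixes n m W :: nat and U :: "nat \<Rightarrow> nat \<Rightarrow> nat \<Rightarrow> complex" and T h L :: nat
  assumes qdim_pos: "0 < qdim n m W"
    and unitary: "\<And>t. t \<le> T \<Longrightarrow> is_unitary (qdim n m W) (U t)"
begin

abbreviation "D \<equiv> qdim n m W"
abbreviation "Perms \<equiv> {\<sigma>. \<sigma> permutes {..<h}}"
abbreviation "psi \<sigma> t \<equiv> run n m W (match_dist h L \<sigma>) U t"

definition edge_mass :: "nat \<Rightarrow> (nat \<Rightarrow> nat) \<Rightarrow> (nat \<Rightarrow> nat) \<Rightarrow> nat \<times> nat \<Rightarrow> real" where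
  "edge_mass t \<sigma> \<tau> p = vec_sqnorm D (proj_queries n m W (pair_edges h \<tau> p) (psi \<sigma> t))"

definition weighted_mass :: "real \<Rightarrow> nat \<Rightarrow> (nat \<Rightarrow> nat) \<Rightarrow> nat \<times> nat \<Rightarrow> real" where
  "weighted_mass s t \<sigma> p = s * edge_mass t \<sigma> \<sigma> p + edge_mass t \<sigma> (swap_pair \<sigma> p) p / s"

definition potential :: "nat \<Rightarrow> real" where
  "potential t =
     (\<Sum>\<sigma>\<in>Perms. \<Sum>p\<in>distinct_pairs h. cmod (vec_inner D (psi \<sigma> t) (psi (swap_pair \<sigma> p) t)))"

lemma vec_sqnorm_psi: "t \<le> T \<Longrightarrow> vec_sqnorm D (psi \<sigma> t) = 1"
  by (rule vec_sqnorm_run[OF qdim_pos unitary])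

lemma edge_mass_nonneg: "0 \<le> edge_mass t \<sigma> \<tau> p"
  unfolding edge_mass_def by (rule vec_sqnorm_nonneg)

lemma overlap_loss_le:
  assumes \<sigma>: "\<sigma> permutes {..<h}" and p: "p \<in> distinct_pairs h" and t: "t < T" and s: "0 < s"
  shows "cmod (vec_inner D (psi \<sigma> t) (psi (swap_pair \<sigma> p) t))
         - cmod (vec_inner D (psi \<sigma> (Suc t)) (psi (swap_pair \<sigma> p) (Suc t)))
    \<le> weighted_mass s t \<sigma> p + weighted_mass s t (swap_pair \<sigma> p) p"
proof -
  let ?\<tau> = "swap_pair \<sigma> p"
  let ?O = "\<lambda>\<sigma>. mat_vec D (oracle_mat n m W (match_dist h L \<sigma>))"
  let ?before = "vec_inner D (psi \<sigma> t) (psi ?\<tau> t)"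
  let ?after = "vec_inner D (?O \<sigma> (psi \<sigma> t)) (?O ?\<tau> (psi ?\<tau> t))"
  have after: "vec_inner D (psi \<sigma> (Suc t)) (psi ?\<tau> (Suc t)) = ?after"
    using vec_inner_unitary[OF unitary[of "Suc t"]] t by simp
  have "cmod (?after - ?before)
     \<le> 2 * (sqrt (edge_mass t \<sigma> \<sigma> p) * sqrt (edge_mass t ?\<tau> \<sigma> p))
       + 2 * (sqrt (edge_mass t \<sigma> ?\<tau> p) * sqrt (edge_mass t ?\<tau> ?\<tau> p))"
    unfolding edge_mass_def
    by (rule oracle_query_bound[OF pair_edges_swap_pair_disjoint[OF \<sigma> p]])
      (use match_dist_swap_pair[OF p] in auto)
  also have "\<dots> \<le> (s * edge_mass t \<sigma> \<sigma> p + edge_mass t ?\<tau> \<sigma> p / s)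
                 + (edge_mass t \<sigma> ?\<tau> p / s + s * edge_mass t ?\<tau> ?\<tau> p)"
    using sqrt_mult_le_weighted[of "edge_mass t \<sigma> \<sigma> p" "edge_mass t ?\<tau> \<sigma> p" s]
      sqrt_mult_le_weighted[of "edge_mass t \<sigma> ?\<tau> p" "edge_mass t ?\<tau> ?\<tau> p" "1/s"] s
    by (simp add: edge_mass_nonneg mult.commute)
  also have "\<dots> = weighted_mass s t \<sigma> p + weighted_mass s t ?\<tau> p"
    unfolding weighted_mass_def by simp
  finally show ?thesis
    unfolding after using norm_triangle_ineq2[of ?before ?after] by (simp add: norm_minus_commute)
qed

lemma sum_weighted_mass_le:
  assumes \<sigma>: "\<sigma> permutes {..<h}" and t: "t \<le> T" and s: "0 < s"
  shows "(\<Sum>p\<in>distinct_pairs h. weighted_mass s t \<sigma> p) \<le> 2 * s * h + 2 / s"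
proof -
  have "(\<Sum>p\<in>distinct_pairs h. edge_mass t \<sigma> \<sigma> p) \<le> real (2 * h) * vec_sqnorm D (psi \<sigma> t)"
    unfolding edge_mass_def
    by (rule sum_vec_sqnorm_proj_queries_le[OF finite_distinct_pairs card_pair_edges_le])
  moreover have "(\<Sum>p\<in>distinct_pairs h. edge_mass t \<sigma> (swap_pair \<sigma> p) p) \<le> real 2 * vec_sqnorm D (psi \<sigma> t)"
    unfolding edge_mass_def
    by (rule sum_vec_sqnorm_proj_queries_le[OF finite_distinct_pairs card_swapped_pair_edges_le[OF \<sigma>]])
  ultimately show ?thesis
    using vec_sqnorm_psi[OF t]
    unfolding weighted_mass_def sum.distrib sum_distrib_left[symmetric] sum_divide_distrib[symmetric]
    using s by (intro add_mono) (simp_all add: divide_right_mono)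
qed

text \<open>The loss of a pair is charged to both of its members; the reindexing
  \<open>(\<sigma>, p) \<mapsto> (\<sigma> \<circ> (a b), p)\<close> turns the second charge into the first.\<close>

lemma potential_step:
  fixes s :: real
  assumes t: "t < T" and s: "0 < s"
  shows "potential t - potential (Suc t) \<le> card Perms * (4 * s * h + 4 / s)"
proof -
  have "potential t - potential (Suc t) \<le>
        (\<Sum>\<sigma>\<in>Perms. \<Sum>p\<in>distinct_pairs h. weighted_mass s t \<sigma> p + weighted_mass s t (swap_pair \<sigma> p) p)"
    unfolding potential_def sum_subtractf[symmetric]
    by (intro sum_mono overlap_loss_le[OF _ _ t s]) auto
  also have "\<dots> = 2 * (\<Sum>\<sigma>\<in>Perms. \<Sum>p\<in>distinct_pairs h. weighted_mass s t \<sigma> p)"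
    using sum_swap_pair_reindex[of "weighted_mass s t"] by (simp add: sum.distrib)
  also have "\<dots> \<le> 2 * (\<Sum>\<sigma>\<in>Perms. 2 * s * h + 2 / s)"
    using t s by (intro mult_left_mono sum_mono) (simp_all add: sum_weighted_mass_le)
  finally show ?thesis by (simp add: algebra_simps)
qed

lemma potential_decrease:
  fixes s :: real
  assumes "t \<le> T" and "0 < s"
  shows "potential 0 - potential t \<le> t * (card Perms * (4 * s * h + 4 / s))"
  using assms(1)
proof (induction t)
  case (Suc t)
  let ?C = "card Perms * (4 * s * h + 4 / s)"
  have "potential 0 - potential (Suc t) = (potential 0 - potential t) + (potential t - potential (Suc t))"
    by simp
  also have "\<dots> \<le> t * ?C + ?C"
    using Suc potential_step[of t s] assms(2) by (intro add_mono) simp_all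
  also have "\<dots> = Suc t * ?C"
    by (simp add: algebra_simps add_divide_distrib)
  finally show ?case .
qed simp

lemma potential_0: "potential 0 = card Perms * card (distinct_pairs h)"
  unfolding potential_def using vec_sqnorm_psi[of 0] by (simp add: vec_inner_self)

lemma card_distinct_pairs_le_queries:
  assumes h: "0 < h"
    and separated: "\<And>\<sigma> p. \<sigma> permutes {..<h} \<Longrightarrow> p \<in> distinct_pairs h \<Longrightarrow>
      cmod (vec_inner D (psi \<sigma> T) (psi (swap_pair \<sigma> p) T)) \<le> 19/20"
  shows "real (card (distinct_pairs h)) \<le> 160 * T * sqrt h"
proof -
  define s where "s = 1 / sqrt h"
  have s: "0 < s" and weights: "4 * s * h + 4 / s = 8 * sqrt h"
    unfolding s_def using h by (simp_all add: field_simps real_sqrt_mult[symmetric])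
  have "potential T \<le> (\<Sum>\<sigma>\<in>Perms. \<Sum>p\<in>distinct_pairs h. 19/20)"
    unfolding potential_def by (intro sum_mono separated) auto
  then have "card Perms * (card (distinct_pairs h) / 20) \<le> card Perms * (T * (8 * sqrt h))"
    using potential_decrease[OF order_refl s] potential_0 unfolding weights
    by (simp add: algebra_simps)
  moreover have "id \<in> Perms" by simp
  then have "0 < card Perms"
    using finite_permutations[OF finite_lessThan, of h] card_gt_0_iff by blast
  ultimately show ?thesis by simp
qed

lemma overlap_le_if_success:
  assumes \<sigma>: "\<sigma> permutes {..<h}" and p: "p \<in> distinct_pairs h" and "2 * h \<le> n" "\<alpha> < real L"
    and success: "\<And>\<sigma>. \<sigma> permutes {..<h} \<Longrightarrow>
      2/3 \<le> success_prob n m W (match_dist h L \<sigma>) U T out (estimates \<alpha> n (match_dist h L \<sigma>))"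
  shows "cmod (vec_inner D (psi \<sigma> T) (psi (swap_pair \<sigma> p) T)) \<le> 19/20"
proof -
  let ?G = "\<lambda>\<sigma>. {k \<in> {..<D}. estimates \<alpha> n (match_dist h L \<sigma>) (out k)}"
  let ?\<tau> = "swap_pair \<sigma> p"
  have near: "2/3 \<le> (\<Sum>k\<in>?G \<sigma>. (cmod (psi \<sigma> T k))\<^sup>2)"
    using success[OF \<sigma>] by (simp add: success_prob_eq_sum)
  have "2/3 \<le> (\<Sum>k\<in>?G ?\<tau>. (cmod (psi ?\<tau> T k))\<^sup>2)"
    using success[OF swap_pair_permutes[OF \<sigma> p]] by (simp add: success_prob_eq_sum)
  also have "\<dots> \<le> (\<Sum>k\<in>{..<D} - ?G \<sigma>. (cmod (psi ?\<tau> T k))\<^sup>2)"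
    using not_estimates_both_match_dists[OF \<sigma> p assms(3,4)] by (intro sum_mono2) auto
  finally have far: "2/3 \<le> (\<Sum>k\<in>{..<D} - ?G \<sigma>. (cmod (psi ?\<tau> T k))\<^sup>2)" .
  show ?thesis
    by (rule cmod_vec_inner_le_if_separated[OF vec_sqnorm_psi vec_sqnorm_psi _ near far]) auto
qed

end

lemma powr_three_halves_le_if_quadratic_le:
  fixes n h :: nat and T :: real
  assumes h: "4 \<le> h" and n: "n \<le> 2 * h + 1"
    and quadratic: "real h * (real h - 1) \<le> 160 * T * sqrt h"
  shows "1/1280 * real n powr (3/2) \<le> T"
proof -
  have "sqrt h * (sqrt h * (real h - 1)) \<le> sqrt h * (160 * T)"
    using quadratic by (simp add: mult.assoc[symmetric] mult.commute)
  then have linear: "sqrt h * (real h - 1) \<le> 160 * T"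
    using h by (simp add: mult_le_cancel_left_pos)
  have "real n powr (3/2) = real n * sqrt n"
    by (cases "n = 0") (simp_all add: powr_add[of _ 1 "1/2", simplified] powr_half_sqrt)
  also have "\<dots> \<le> (4 * (real h - 1)) * (2 * sqrt h)"
  proof (rule mult_mono)
    show "sqrt n \<le> 2 * sqrt h"
      using real_sqrt_le_mono[of n "4 * h"] n h by (simp add: real_sqrt_mult)
  qed (use h n in auto)
  also have "\<dots> \<le> 1280 * T"
    using linear by (simp add: algebra_simps)
  finally show ?thesis by simp
qed

lemma queries_lower_bound:
  assumes n: "8 \<le> n" and L: "\<alpha> < real L" "1 \<le> L" "L < m"
    and unitary: "\<forall>t\<le>T. is_unitary (qdim n m W) (U t)"
    and success: "\<forall>d. is_metric_bounded n m d \<longrightarrow>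
      2/3 \<le> success_prob n m W d U T out (estimates \<alpha> n d)"
  shows "1/1280 * real n powr (3/2) \<le> real T"
proof -
  define h where "h = n div 2"
  have h: "2 * h \<le> n" "n \<le> 2 * h + 1" "4 \<le> h"
    using n unfolding h_def by auto
  have success_match: "2/3 \<le> success_prob n m W (match_dist h L \<sigma>) U T out
      (estimates \<alpha> n (match_dist h L \<sigma>))" if "\<sigma> permutes {..<h}" for \<sigma>
    using success is_metric_bounded_match_dist[OF that h(1) L(2,3)] by blast
  have "0 < qdim n m W" \<comment> \<open>on an empty state space every success probability is 0\<close>
    using success_match[OF permutes_id] by (auto simp: success_prob_def intro: gr0I)
  then interpret adversary n m W U T h L
    using unitary by unfold_locales auto
  have "real (card (distinct_pairs h)) \<le> 160 * T * sqrt h"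
    using h overlap_le_if_success[OF _ _ h(1) L(1) success_match]
    by (intro card_distinct_pairs_le_queries) auto
  then show ?thesis
    using h by (intro powr_three_halves_le_if_quadratic_le) (auto simp: card_distinct_pairs of_nat_diff algebra_simps)
qed

theorem mainTheorem11:
  fixes \<alpha> :: real
  assumes "\<alpha> \<ge> 1"
  shows "\<exists>c>0. \<exists>m0 N. \<forall>n\<ge>N. \<forall>m\<ge>m0. \<forall>W T U out.
           (\<forall>t\<le>T. is_unitary (qdim n m W) (U t)) \<and>
           (\<forall>d. is_metric_bounded n m d \<longrightarrow>
                  success_prob n m W d U T out (estimates \<alpha> n d) \<ge> 2/3)
           \<longrightarrow> real T \<ge> c * real n powr (3/2)"
proof -
  define L where "L = nat \<lceil>\<alpha>\<rceil> + 1"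
  have L: "\<alpha> < real L" "1 \<le> L"
    unfolding L_def using assms by linarith+
  show ?thesis
    by (rule exI[of _ "1/1280 :: real"], rule conjI, simp, rule exI[of _ "L + 1"], rule exI[of _ 8],
        intro allI impI, elim conjE, rule queries_lower_bound[OF _ L]) auto
qed

end
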